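(* Let $r\ge 1$ and let $q_1\le\cdots\le q_r$ be positive even integers. Let $G=\Theta_{1,q_1,\ldots,q_r}$. If $p\ge\max\{4,\Delta(G)\}$, then $G$ is strongly $p$-edge-orientable.
   Context: For positive integers $p_1,\ldots,p_k$, the $\Theta$-graph $\Theta_{p_1,\ldots,p_k}$ is the graph obtained from two vertices $x_1,x_2$ joined by $k$ internally disjoint paths, the $i$th path having $p_i$ edges. A path with $1$ edge is the edge $x_1x_2$. An orientation of a graph $H$ is any digraph obtained by replacing each edge $uv$ with the arc $(u,v)$, with the arc $(v,u)$, or with both arcs. A kernel of a digraph $D$ is an independent set $S$ such that every vertex of $D-S$ has an out-neighbor in $S$. $D$ is kernel-perfect if every induced subdigraph of $D$ has a kernel. For $f:V(H)\to\mathbb{N}$, an orientation $D$ of $H$ is $f$-kernel-perfect if it is kernel-perfect and $f(v)\ge 1+d^+_D(v)$ for all $v$. For $f:E(G)\to\mathbb{N}$, $G$ is $f$-edge-orientable if its line graph $L(G)$ admits an $f$-kernel-perfect orientation. For $v\in V(G)$, define $f_{k,v}:E(G)\to\mathbb{N}$ by $f_{k,v}(e)=d_G(v)$ if $e$ is incident to $v$, and $f_{k,v}(e)=k$ otherwise. $G$ is strongly $k$-edge-orientable if $G$ is $f_{k,v}$-edge-orientable for every $v\in V(G)$. *)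

theory Defs
  imports Main
begin

definition orientation :: "'a set \<Rightarrow> ('a \<Rightarrow> 'a \<Rightarrow> bool) \<Rightarrow> ('a \<times> 'a) set \<Rightarrow> bool" where
  "orientation V adj A \<longleftrightarrow>
     A \<subseteq> {(u, v). u \<in> V \<and> v \<in> V \<and> adj u v} \<and>
     (\<forall>u\<in>V. \<forall>v\<in>V. adj u v \<longrightarrow> (u, v) \<in> A \<or> (v, u) \<in> A)"

definition is_kernel :: "('a \<times> 'a) set \<Rightarrow> 'a set \<Rightarrow> 'a set \<Rightarrow> bool" where
  "is_kernel A S K \<longleftrightarrow>
     K \<subseteq> S \<and> (\<forall>u\<in>K. \<forall>v\<in>K. (u, v) \<notin> A) \<and>
     (\<forall>v\<in>S - K. \<exists>w\<in>K. (v, w) \<in> A)"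

definition kernel_perfect :: "'a set \<Rightarrow> ('a \<times> 'a) set \<Rightarrow> bool" where
  "kernel_perfect V A \<longleftrightarrow> (\<forall>S. S \<subseteq> V \<longrightarrow> (\<exists>K. is_kernel A S K))"

definition out_degree :: "('a \<times> 'a) set \<Rightarrow> 'a \<Rightarrow> nat" where
  "out_degree A v = card {w. (v, w) \<in> A}"

definition f_kernel_perfect_orientation ::
  "'a set \<Rightarrow> ('a \<Rightarrow> 'a \<Rightarrow> bool) \<Rightarrow> ('a \<Rightarrow> nat) \<Rightarrow> ('a \<times> 'a) set \<Rightarrow> bool" where
  "f_kernel_perfect_orientation V adj f A \<longleftrightarrow>
     orientation V adj A \<and> kernel_perfect V A \<and> (\<forall>v\<in>V. f v \<ge> 1 + out_degree A v)"

definition line_adj :: "'a set \<Rightarrow> 'a set \<Rightarrow> bool" where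
  "line_adj e e' \<longleftrightarrow> e \<noteq> e' \<and> e \<inter> e' \<noteq> {}"

definition f_edge_orientable :: "'a set set \<Rightarrow> ('a set \<Rightarrow> nat) \<Rightarrow> bool" where
  "f_edge_orientable E f \<longleftrightarrow> (\<exists>A. f_kernel_perfect_orientation E line_adj f A)"

definition degree :: "'a set set \<Rightarrow> 'a \<Rightarrow> nat" where
  "degree E v = card {e \<in> E. v \<in> e}"

definition max_degree :: "'a set \<Rightarrow> 'a set set \<Rightarrow> nat" where
  "max_degree V E = Max (degree E ` V)"

definition f_kv :: "'a set set \<Rightarrow> nat \<Rightarrow> 'a \<Rightarrow> 'a set \<Rightarrow> nat" where
  "f_kv E k v e = (if v \<in> e then degree E v else k)"

definition strongly_edge_orientable :: "'a set \<Rightarrow> 'a set set \<Rightarrow> nat \<Rightarrow> bool" where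
  "strongly_edge_orientable V E k \<longleftrightarrow> (\<forall>v\<in>V. f_edge_orientable E (f_kv E k v))"

(* Theta graph Theta_{p_1,...,p_k} with ps = [p_1,...,p_k] (0-indexed paths).
   x1 = (0,0), x2 = (0,1); j-th vertex of path i (0 < j < p_i) is (Suc i, j). *)
definition theta_vertex :: "nat list \<Rightarrow> nat \<Rightarrow> nat \<Rightarrow> nat \<times> nat" where
  "theta_vertex ps i j = (if j = 0 then (0, 0) else if j = ps ! i then (0, 1) else (Suc i, j))"

definition theta_vertices :: "nat list \<Rightarrow> (nat \<times> nat) set" where
  "theta_vertices ps = {(0, 0), (0, 1)} \<union>
     {theta_vertex ps i j | i j. i < length ps \<and> j \<le> ps ! i}"

definition theta_edges :: "nat list \<Rightarrow> (nat \<times> nat) set set" where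
  "theta_edges ps = {{theta_vertex ps i j, theta_vertex ps i (Suc j)} | i j. i < length ps \<and> j < ps ! i}"

end

theory Submission
  imports Defs
begin

text \<open>
  Index the edges of \<open>\<Theta>\<^sub>p\<^sub>s\<close> by pairs \<open>(i, j)\<close>, the \<open>j\<close>-th edge of the \<open>i\<close>-th path; path \<open>0\<close> is the
  chord \<open>x\<^sub>1x\<^sub>2\<close>. The line graph consists of the two cliques of edges at \<open>x\<^sub>1\<close> and at \<open>x\<^sub>2\<close>, which
  share the chord, joined by the paths. Every orientation used below assigns each line-graph
  vertex a level and a colour and lets arcs go either to a strictly lower level or, inside a
  level, to the other colour; such digraphs are kernel-perfect because the least level of any
  induced subdigraph contains a semikernel (a sink, or one colour class of that level).

  For a vertex \<open>v\<close> of degree 2 the two edges at \<open>v\<close> form the lowest level; the chord, the end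
  edges of the path through \<open>v\<close> and then the end edges of the remaining paths, ranked one above
  the other, follow; the inner path edges come last. Apart from at most one edge on its own level
  or its own path, an end edge at a hub then points only to the chord, to the path through \<open>v\<close>
  and to end edges of lower rank at that hub, so its out-degree stays below \<open>\<Delta>(G)\<close>; letting
  the two top-ranked paths share a level saves the one arc that would break this bound. The case
  \<open>v = x\<^sub>1\<close> is the same scheme without a distinguished path, and \<open>x\<^sub>2\<close> follows from it by
  reversing all paths.
\<close>

definition semikernel :: "('a \<times> 'a) set \<Rightarrow> 'a set \<Rightarrow> 'a set \<Rightarrow> bool" where
  "semikernel A S J \<longleftrightarrow> J \<subseteq> S \<and> J \<noteq> {} \<and> (\<forall>u\<in>J. \<forall>v\<in>J. (u, v) \<notin> A) \<and>
     (\<forall>u\<in>J. \<forall>w\<in>S - J. (u, w) \<in> A \<longrightarrow> (\<exists>z\<in>J. (w, z) \<in> A))"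

text \<open>Neumann-Lara: remove a semikernel together with its in-neighbours and recurse.\<close>

lemma kernel_if_semikernels:
  assumes "finite S"
    and "\<And>T. T \<subseteq> S \<Longrightarrow> T \<noteq> {} \<Longrightarrow> \<exists>J. semikernel A T J"
  shows "\<exists>K. is_kernel A S K"
  using assms
proof (induction "card S" arbitrary: S rule: less_induct)
  case less
  show ?case
  proof (cases "S = {}")
    case True
    then show ?thesis unfolding is_kernel_def by auto
  next
    case False
    then obtain J where J: "semikernel A S J" using less.prems(2)[of S] by auto
    define S' where "S' = S - J - {w\<in>S. \<exists>z\<in>J. (w, z) \<in> A}"
    have "S' \<subseteq> S" unfolding S'_def by auto
    moreover have "S' \<noteq> S" using J unfolding semikernel_def S'_def by auto
    ultimately have "card S' < card S" using less.prems(1) by (meson psubsetI psubset_card_mono)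
    moreover have "finite S'" using \<open>S' \<subseteq> S\<close> less.prems(1) by (rule finite_subset)
    ultimately obtain K' where K': "is_kernel A S' K'"
      using less.hyps \<open>S' \<subseteq> S\<close> less.prems(2) by (meson order_trans)
    have "is_kernel A S (J \<union> K')"
      using J K' unfolding is_kernel_def semikernel_def S'_def by (auto; blast)
    then show ?thesis by blast
  qed
qed

lemma semikernel_in_least_level:
  fixes lv :: "'a \<Rightarrow> nat" and pa :: "'a \<Rightarrow> bool"
  assumes fin: "finite T" and ne: "T \<noteq> {}"
    and arcs: "\<And>x y. (x, y) \<in> A \<Longrightarrow> lv y < lv x \<or> (lv y = lv x \<and> pa y \<noteq> pa x)"
  shows "\<exists>J. semikernel A T J"
proof -
  have "Min (lv ` T) \<in> lv ` T" using fin ne by simp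
  then obtain x0 where x0: "x0 \<in> T" "lv x0 = Min (lv ` T)" by auto
  then have least: "lv x0 \<le> lv x" if "x \<in> T" for x using fin that by simp
  define M where "M = {x\<in>T. lv x = lv x0}"
  have arcM: "w \<in> M \<and> pa w \<noteq> pa u" if "u \<in> M" "w \<in> T" "(u, w) \<in> A" for u w
    using that arcs[of u w] least[of w] unfolding M_def by auto
  show ?thesis
  proof (cases "\<exists>x\<in>M. \<forall>w\<in>T. (x, w) \<notin> A")
    case True
    then obtain x where "x \<in> M" "\<forall>w\<in>T. (x, w) \<notin> A" by auto
    then have "semikernel A T {x}" unfolding semikernel_def M_def by auto
    then show ?thesis by blast
  next
    case no_sink: False
    define J where "J = {x\<in>M. pa x = pa x0}"
    have "semikernel A T J"
      unfolding semikernel_def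
    proof (intro conjI ballI impI)
      show "J \<subseteq> T" unfolding J_def M_def by auto
      show "J \<noteq> {}" using x0(1) unfolding J_def M_def by auto
    next
      fix u v assume "u \<in> J" "v \<in> J"
      then show "(u, v) \<notin> A" using arcM[of u v] unfolding J_def M_def by auto
    next
      fix u w assume u: "u \<in> J" and w: "w \<in> T - J" and uw: "(u, w) \<in> A"
      have wM: "w \<in> M" "pa w \<noteq> pa u" using arcM[of u w] u w uw unfolding J_def by auto
      then obtain z where z: "z \<in> T" "(w, z) \<in> A" using no_sink by auto
      have "z \<in> M" "pa z \<noteq> pa w" using arcM[OF wM(1) z] by auto
      then have "z \<in> J" using wM u unfolding J_def by auto
      then show "\<exists>z\<in>J. (w, z) \<in> A" using z by auto
    qed
    then show ?thesis by blast
  qed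
qed

lemma kernel_perfect_by_level_and_colour:
  fixes lv :: "'a \<Rightarrow> nat" and pa :: "'a \<Rightarrow> bool"
  assumes "finite V"
    and "\<And>x y. (x, y) \<in> A \<Longrightarrow> lv y < lv x \<or> (lv y = lv x \<and> pa y \<noteq> pa x)"
  shows "kernel_perfect V A"
  unfolding kernel_perfect_def
proof (intro allI impI)
  fix S assume "S \<subseteq> V"
  then have "finite S" using assms(1) by (rule finite_subset)
  then show "\<exists>K. is_kernel A S K"
  proof (rule kernel_if_semikernels)
    fix T assume "T \<subseteq> S" "T \<noteq> {}"
    then show "\<exists>J. semikernel A T J"
      using semikernel_in_least_level[of T A lv pa] assms(2) finite_subset \<open>finite S\<close> by blast
  qed
qed

lemma image_map_prod_mem_iff:
  assumes "inj_on g V" "B \<subseteq> V \<times> V" "x \<in> V" "y \<in> V"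
  shows "(g x, g y) \<in> map_prod g g ` B \<longleftrightarrow> (x, y) \<in> B"
  using inj_on_image_mem_iff[OF map_prod_inj_on[OF assms(1,1)], of "(x, y)" B] assms(2-4) by auto

lemma kernel_perfect_image:
  assumes inj: "inj_on g V" and BV: "B \<subseteq> V \<times> V" and kp: "kernel_perfect V B"
  shows "kernel_perfect (g ` V) (map_prod g g ` B)"
  unfolding kernel_perfect_def
proof (intro allI impI)
  fix S' assume "S' \<subseteq> g ` V"
  then obtain S where SV: "S \<subseteq> V" and S': "S' = g ` S" by (meson subset_image_iff)
  obtain K where K: "is_kernel B S K" using kp SV unfolding kernel_perfect_def by auto
  have KV: "K \<subseteq> V" using K SV unfolding is_kernel_def by auto
  have "is_kernel (map_prod g g ` B) S' (g ` K)"
    unfolding is_kernel_def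
  proof (intro conjI ballI)
    show "g ` K \<subseteq> S'" using K S' unfolding is_kernel_def by auto
  next
    fix u v assume "u \<in> g ` K" "v \<in> g ` K"
    then obtain a b where ab: "a \<in> K" "b \<in> K" "u = g a" "v = g b" by auto
    then have "a \<in> V" "b \<in> V" "(a, b) \<notin> B" using K KV unfolding is_kernel_def by auto
    then show "(u, v) \<notin> map_prod g g ` B" using image_map_prod_mem_iff[OF inj BV] ab by simp
  next
    fix v assume "v \<in> S' - g ` K"
    then obtain a where "a \<in> S - K" "v = g a" using S' by auto
    then show "\<exists>w\<in>g ` K. (v, w) \<in> map_prod g g ` B" using K unfolding is_kernel_def by force
  qed
  then show "\<exists>K. is_kernel (map_prod g g ` B) S' K" by blast
qed

lemma out_degree_image:
  assumes inj: "inj_on g V" and BV: "B \<subseteq> V \<times> V" and x: "x \<in> V"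
  shows "out_degree (map_prod g g ` B) (g x) = out_degree B x"
proof -
  have "{w. (g x, w) \<in> map_prod g g ` B} = g ` {w. (x, w) \<in> B}"
  proof (intro equalityI subsetI)
    fix w assume "w \<in> {w. (g x, w) \<in> map_prod g g ` B}"
    then obtain a b where "(a, b) \<in> B" "g a = g x" "w = g b" by auto
    moreover from this have "a = x" using inj x BV by (auto dest: inj_onD)
    ultimately show "w \<in> g ` {w. (x, w) \<in> B}" by auto
  qed auto
  moreover have "inj_on g {w. (x, w) \<in> B}" using inj BV by (auto intro: inj_on_subset)
  ultimately show ?thesis unfolding out_degree_def by (simp add: card_image)
qed

lemma f_kernel_perfect_orientation_image:
  assumes inj: "inj_on g V"
    and adj: "\<And>x y. x \<in> V \<Longrightarrow> y \<in> V \<Longrightarrow> adj' (g x) (g y) = adj x y"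
    and f: "\<And>x. x \<in> V \<Longrightarrow> f' (g x) = f x"
    and B: "f_kernel_perfect_orientation V adj f B"
  shows "f_kernel_perfect_orientation (g ` V) adj' f' (map_prod g g ` B)"
proof -
  have BV: "B \<subseteq> V \<times> V" and Badj: "\<And>u v. (u, v) \<in> B \<Longrightarrow> adj u v"
    and total: "\<forall>u\<in>V. \<forall>v\<in>V. adj u v \<longrightarrow> (u, v) \<in> B \<or> (v, u) \<in> B"
    using B unfolding f_kernel_perfect_orientation_def orientation_def by auto
  have "map_prod g g ` B \<subseteq> {(u, v). u \<in> g ` V \<and> v \<in> g ` V \<and> adj' u v}"
    using BV Badj adj by fastforce
  moreover have "\<forall>u\<in>g ` V. \<forall>v\<in>g ` V. adj' u v \<longrightarrow>
      (u, v) \<in> map_prod g g ` B \<or> (v, u) \<in> map_prod g g ` B"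
    using total adj image_map_prod_mem_iff[OF inj BV] by auto
  ultimately have "orientation (g ` V) adj' (map_prod g g ` B)" unfolding orientation_def by blast
  then show ?thesis
    using B kernel_perfect_image[OF inj BV] out_degree_image[OF inj BV] f
    unfolding f_kernel_perfect_orientation_def by auto
qed

text \<open>
  \<open>chorded_theta ps\<close>: \<open>ps = [1, q\<^sub>1, \<dots>, q\<^sub>r]\<close> lists the path lengths with all \<open>q\<^sub>i \<ge> 2\<close>, which is
  exactly what makes the theta graph simple.
\<close>

definition chorded_theta :: "nat list \<Rightarrow> bool" where
  "chorded_theta ps \<longleftrightarrow> ps \<noteq> [] \<and> ps ! 0 = 1 \<and> (\<forall>i. 0 < i \<and> i < length ps \<longrightarrow> 2 \<le> ps ! i)"

definition edge_index :: "nat list \<Rightarrow> (nat \<times> nat) set" where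
  "edge_index ps = {(i, j). i < length ps \<and> j < ps ! i}"

definition theta_edge :: "nat list \<Rightarrow> nat \<times> nat \<Rightarrow> (nat \<times> nat) set" where
  "theta_edge ps x = {theta_vertex ps (fst x) (snd x), theta_vertex ps (fst x) (Suc (snd x))}"

definition index_adj :: "nat list \<Rightarrow> nat \<times> nat \<Rightarrow> nat \<times> nat \<Rightarrow> bool" where
  "index_adj ps x y \<longleftrightarrow> x \<noteq> y \<and> ((snd x = 0 \<and> snd y = 0) \<or>
     (Suc (snd x) = ps ! fst x \<and> Suc (snd y) = ps ! fst y) \<or>
     (fst x = fst y \<and> (Suc (snd x) = snd y \<or> Suc (snd y) = snd x)))"

lemma chorded_theta_length_pos: "chorded_theta ps \<Longrightarrow> i < length ps \<Longrightarrow> 1 \<le> ps ! i"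
  unfolding chorded_theta_def by (cases "i = 0") auto

lemma chorded_theta_length_one: "chorded_theta ps \<Longrightarrow> i < length ps \<Longrightarrow> ps ! i = 1 \<Longrightarrow> i = 0"
  unfolding chorded_theta_def by (metis gr0I numeral_le_one_iff semiring_norm(69))

lemma theta_vertex_eq_iff:
  assumes "chorded_theta ps" "i < length ps" "j \<le> ps ! i" "i' < length ps" "j' \<le> ps ! i'"
  shows "theta_vertex ps i j = theta_vertex ps i' j' \<longleftrightarrow>
    (j = 0 \<and> j' = 0) \<or> (j = ps ! i \<and> j' = ps ! i') \<or> (i = i' \<and> j = j')"
  using chorded_theta_length_pos[OF assms(1,2)] chorded_theta_length_pos[OF assms(1,4)] assms(3,5)
  unfolding theta_vertex_def by auto

lemma theta_edges_eq_image: "theta_edges ps = theta_edge ps ` edge_index ps"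
  unfolding theta_edges_def theta_edge_def edge_index_def by force

lemma inj_on_theta_edge:
  assumes g: "chorded_theta ps"
  shows "inj_on (theta_edge ps) (edge_index ps)"
proof (rule inj_onI)
  fix x y assume x: "x \<in> edge_index ps" and y: "y \<in> edge_index ps"
    and e: "theta_edge ps x = theta_edge ps y"
  obtain i j i' j' where xy: "x = (i, j)" "y = (i', j')" by (cases x, cases y)
  have h: "i < length ps" "j < ps ! i" "i' < length ps" "j' < ps ! i'"
    using x y xy unfolding edge_index_def by auto
  note T = theta_vertex_eq_iff[OF g]
  have "(theta_vertex ps i j = theta_vertex ps i' j' \<and>
         theta_vertex ps i (Suc j) = theta_vertex ps i' (Suc j')) \<or>
        (theta_vertex ps i j = theta_vertex ps i' (Suc j') \<and>
         theta_vertex ps i (Suc j) = theta_vertex ps i' j')"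
    using e unfolding theta_edge_def xy by (auto simp: doubleton_eq_iff)
  then show "x = y"
  proof
    assume a: "theta_vertex ps i j = theta_vertex ps i' j' \<and>
      theta_vertex ps i (Suc j) = theta_vertex ps i' (Suc j')"
    have "(j = 0 \<and> j' = 0) \<or> (i = i' \<and> j = j')" using a T[of i j i' j'] h by auto
    moreover have "(Suc j = ps ! i \<and> Suc j' = ps ! i') \<or> (i = i' \<and> j = j')"
      using a T[of i "Suc j" i' "Suc j'"] h by auto
    ultimately show "x = y"
      using chorded_theta_length_one[OF g, of i] chorded_theta_length_one[OF g, of i'] h xy by auto
  next
    assume a: "theta_vertex ps i j = theta_vertex ps i' (Suc j') \<and>
      theta_vertex ps i (Suc j) = theta_vertex ps i' j'"
    have "i = i' \<and> j = Suc j'" using a T[of i j i' "Suc j'"] h by auto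
    moreover have "(Suc j = ps ! i \<and> j' = ps ! i') \<or> (i = i' \<and> Suc j = j')"
      using a T[of i "Suc j" i' j'] h by auto
    ultimately show "x = y" using h by auto
  qed
qed

lemma line_adj_theta_edge:
  assumes g: "chorded_theta ps" and x: "x \<in> edge_index ps" and y: "y \<in> edge_index ps"
  shows "line_adj (theta_edge ps x) (theta_edge ps y) = index_adj ps x y"
proof -
  obtain i j i' j' where xy: "x = (i, j)" "y = (i', j')" by (cases x, cases y)
  have h: "i < length ps" "j < ps ! i" "i' < length ps" "j' < ps ! i'"
    using x y xy unfolding edge_index_def by auto
  have ne: "(theta_edge ps x \<noteq> theta_edge ps y) = (x \<noteq> y)"
    using inj_on_theta_edge[OF g] x y by (auto dest: inj_onD)
  note T = theta_vertex_eq_iff[OF g]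
  have "(theta_edge ps x \<inter> theta_edge ps y \<noteq> {}) \<longleftrightarrow>
    theta_vertex ps i j = theta_vertex ps i' j' \<or> theta_vertex ps i j = theta_vertex ps i' (Suc j') \<or>
    theta_vertex ps i (Suc j) = theta_vertex ps i' j' \<or>
    theta_vertex ps i (Suc j) = theta_vertex ps i' (Suc j')"
    unfolding theta_edge_def xy by auto
  also have "\<dots> \<longleftrightarrow> (j = 0 \<and> j' = 0) \<or> (Suc j = ps ! i \<and> Suc j' = ps ! i') \<or>
      (i = i' \<and> (j = j' \<or> j = Suc j' \<or> Suc j = j'))"
    using T[of i j i' j'] T[of i j i' "Suc j'"] T[of i "Suc j" i' j'] T[of i "Suc j" i' "Suc j'"] h
    by auto
  finally show ?thesis unfolding line_adj_def index_adj_def ne using xy by auto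
qed

lemma hub1_in_theta_edge_iff:
  assumes g: "chorded_theta ps" and x: "x \<in> edge_index ps"
  shows "(0, 0) \<in> theta_edge ps x \<longleftrightarrow> snd x = 0"
proof -
  obtain i j where xy: "x = (i, j)" by (cases x)
  have h: "i < length ps" "j < ps ! i" using x xy unfolding edge_index_def by auto
  have "(0, 0) = theta_vertex ps i 0" unfolding theta_vertex_def by simp
  then show ?thesis
    unfolding theta_edge_def xy
    using theta_vertex_eq_iff[OF g, of i j i 0] theta_vertex_eq_iff[OF g, of i "Suc j" i 0] h by auto
qed

lemma hub2_in_theta_edge_iff:
  assumes g: "chorded_theta ps" and x: "x \<in> edge_index ps"
  shows "(0, 1) \<in> theta_edge ps x \<longleftrightarrow> Suc (snd x) = ps ! fst x"
proof -
  obtain i j where xy: "x = (i, j)" by (cases x)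
  have h: "i < length ps" "j < ps ! i" using x xy unfolding edge_index_def by auto
  then have "(0, 1) = theta_vertex ps i (ps ! i)" unfolding theta_vertex_def by simp
  then show ?thesis
    unfolding theta_edge_def xy
    using theta_vertex_eq_iff[OF g, of i j i "ps ! i"] theta_vertex_eq_iff[OF g, of i "Suc j" i "ps ! i"] h
    by auto
qed

lemma inner_vertex_in_theta_edge_iff:
  assumes g: "chorded_theta ps" and x: "x \<in> edge_index ps"
    and v: "i < length ps" "0 < j" "j < ps ! i"
  shows "theta_vertex ps i j \<in> theta_edge ps x \<longleftrightarrow> fst x = i \<and> (snd x = j \<or> Suc (snd x) = j)"
proof -
  obtain k l where xy: "x = (k, l)" by (cases x)
  have h: "k < length ps" "l < ps ! k" using x xy unfolding edge_index_def by auto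
  show ?thesis
    unfolding theta_edge_def xy
    using theta_vertex_eq_iff[OF g, of k l i j] theta_vertex_eq_iff[OF g, of k "Suc l" i j] h v by auto
qed

lemma degree_theta_edges:
  assumes g: "chorded_theta ps"
  shows "degree (theta_edges ps) v = card {x\<in>edge_index ps. v \<in> theta_edge ps x}"
proof -
  have "{e \<in> theta_edges ps. v \<in> e} = theta_edge ps ` {x\<in>edge_index ps. v \<in> theta_edge ps x}"
    unfolding theta_edges_eq_image by auto
  moreover have "inj_on (theta_edge ps) {x\<in>edge_index ps. v \<in> theta_edge ps x}"
    using inj_on_theta_edge[OF g] by (rule inj_on_subset) auto
  ultimately show ?thesis unfolding degree_def by (simp add: card_image)
qed

lemma degree_hub1:
  assumes g: "chorded_theta ps"
  shows "degree (theta_edges ps) (0, 0) = length ps"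
proof -
  have "{x\<in>edge_index ps. (0, 0) \<in> theta_edge ps x} = (\<lambda>i. (i, 0)) ` {..<length ps}"
    using hub1_in_theta_edge_iff[OF g] chorded_theta_length_pos[OF g] unfolding edge_index_def by force
  then show ?thesis unfolding degree_theta_edges[OF g] by (simp add: card_image inj_on_def)
qed

lemma degree_hub2:
  assumes g: "chorded_theta ps"
  shows "degree (theta_edges ps) (0, 1) = length ps"
proof -
  have "{x\<in>edge_index ps. (0, 1) \<in> theta_edge ps x} = (\<lambda>i. (i, ps ! i - 1)) ` {..<length ps}"
  proof (intro equalityI subsetI)
    fix x assume "x \<in> {x\<in>edge_index ps. (0, 1) \<in> theta_edge ps x}"
    then show "x \<in> (\<lambda>i. (i, ps ! i - 1)) ` {..<length ps}"
      using hub2_in_theta_edge_iff[OF g] unfolding edge_index_def by (force simp: image_iff)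
  next
    fix x assume "x \<in> (\<lambda>i. (i, ps ! i - 1)) ` {..<length ps}"
    then obtain i where "i < length ps" "x = (i, ps ! i - 1)" by auto
    then show "x \<in> {x\<in>edge_index ps. (0, 1) \<in> theta_edge ps x}"
      using hub2_in_theta_edge_iff[OF g, of x] chorded_theta_length_pos[OF g, of i]
      unfolding edge_index_def by auto
  qed
  then show ?thesis unfolding degree_theta_edges[OF g] by (simp add: card_image inj_on_def)
qed

lemma degree_inner_vertex:
  assumes g: "chorded_theta ps" and v: "i < length ps" "0 < j" "j < ps ! i"
  shows "degree (theta_edges ps) (theta_vertex ps i j) = 2"
proof -
  have "{x\<in>edge_index ps. theta_vertex ps i j \<in> theta_edge ps x} = {(i, j - 1), (i, j)}"
    using inner_vertex_in_theta_edge_iff[OF g _ v] v unfolding edge_index_def by force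
  then show ?thesis unfolding degree_theta_edges[OF g] using v by simp
qed

lemma theta_vertex_cases:
  assumes "v \<in> theta_vertices ps"
  obtains "v = (0, 0)" | "v = (0, 1)"
    | i j where "i < length ps" "0 < j" "j < ps ! i" "v = theta_vertex ps i j"
proof -
  consider "v = (0, 0)" | "v = (0, 1)"
    | i j where "i < length ps" "j \<le> ps ! i" "v = theta_vertex ps i j"
    using assms unfolding theta_vertices_def by blast
  then show thesis
  proof cases
    case (3 i j)
    show thesis
    proof (cases "j = 0 \<or> j = ps ! i")
      case True
      then have "v = (0, 0) \<or> v = (0, 1)" using 3 unfolding theta_vertex_def by auto
      then show thesis using that(1,2) by blast
    next
      case False
      then show thesis using 3 that(3)[of i j] by auto
    qed
  qed (use that in auto)
qed

lemma finite_theta_vertices: "finite (theta_vertices ps)"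
proof -
  have "{theta_vertex ps i j | i j. i < length ps \<and> j \<le> ps ! i}
      = (\<lambda>(i, j). theta_vertex ps i j) ` (SIGMA i:{..<length ps}. {..ps ! i})"
    by auto
  then show ?thesis unfolding theta_vertices_def by auto
qed

lemma finite_edge_index: "finite (edge_index ps)"
proof -
  have "edge_index ps = (SIGMA i:{..<length ps}. {..<ps ! i})" unfolding edge_index_def by auto
  then show ?thesis by auto
qed

definition reverse_path :: "nat list \<Rightarrow> nat \<times> nat \<Rightarrow> nat \<times> nat" where
  "reverse_path ps x = (fst x, ps ! fst x - Suc (snd x))"

lemma reverse_path_in_edge_index: "x \<in> edge_index ps \<Longrightarrow> reverse_path ps x \<in> edge_index ps"
  unfolding reverse_path_def edge_index_def by auto

lemma reverse_path_reverse_path: "x \<in> edge_index ps \<Longrightarrow> reverse_path ps (reverse_path ps x) = x"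
  unfolding reverse_path_def edge_index_def by auto

lemma reverse_path_image: "reverse_path ps ` edge_index ps = edge_index ps"
  using reverse_path_in_edge_index reverse_path_reverse_path by (metis image_eqI image_subsetI subsetI subset_antisym)

lemma inj_on_reverse_path: "inj_on (reverse_path ps) (edge_index ps)"
  by (metis inj_on_def reverse_path_reverse_path)

lemma index_adj_reverse_path:
  assumes "x \<in> edge_index ps" "y \<in> edge_index ps"
  shows "index_adj ps (reverse_path ps x) (reverse_path ps y) = index_adj ps x y"
proof -
  obtain i j i' j' where xy: "x = (i, j)" "y = (i', j')" by (cases x, cases y)
  then have "j < ps ! i" "j' < ps ! i'" using assms unfolding edge_index_def by auto
  then show ?thesis unfolding reverse_path_def index_adj_def xy fst_conv snd_conv by auto
qed

text \<open>
  The orientation used for a vertex of degree 2 on path \<open>i0\<close>, with \<open>U\<close> the two edges at that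
  vertex; the hub \<open>x\<^sub>1\<close> is the case \<open>i0 = length ps\<close>, \<open>U = {}\<close> (no distinguished path). The
  remaining paths are ranked \<open>1, \<dots>, m\<close>; the end edges of the path of rank \<open>r\<close> lie on level
  \<open>2 + min r K\<close>, so for \<open>m \<ge> 2\<close> the two top-ranked paths share a level. On a level arcs run from
  colour \<open>False\<close> to \<open>True\<close> between edges at a common hub and from \<open>True\<close> to \<open>False\<close> along
  a path; inner path edges alternate in colour, and \<open>top_path\<close> swaps the colours of the end
  edges of the top-ranked path so that each shared-level end edge has one out-neighbour there.
\<close>

definition other_paths :: "nat list \<Rightarrow> nat \<Rightarrow> nat set" where
  "other_paths ps i0 = {k. 1 \<le> k \<and> k < length ps \<and> k \<noteq> i0}"

definition other_count :: "nat list \<Rightarrow> nat \<Rightarrow> nat" where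
  "other_count ps i0 = (if i0 < length ps then length ps - 2 else length ps - 1)"

definition rank :: "nat \<Rightarrow> nat \<Rightarrow> nat" where
  "rank i0 i = (if i < i0 then i else i - 1)"

definition rank_cap :: "nat list \<Rightarrow> nat \<Rightarrow> nat" where
  "rank_cap ps i0 = max 1 (other_count ps i0 - 1)"

definition top_path :: "nat list \<Rightarrow> nat \<Rightarrow> nat \<Rightarrow> bool" where
  "top_path ps i0 i \<longleftrightarrow> rank i0 i = other_count ps i0 \<and> 2 \<le> other_count ps i0"

definition end_edge :: "nat list \<Rightarrow> nat \<times> nat \<Rightarrow> bool" where
  "end_edge ps x \<longleftrightarrow> fst x \<noteq> 0 \<and> (snd x = 0 \<or> Suc (snd x) = ps ! fst x)"

definition level :: "nat list \<Rightarrow> nat \<Rightarrow> (nat \<times> nat) set \<Rightarrow> nat \<times> nat \<Rightarrow> nat" where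
  "level ps i0 U x =
    (if x \<in> U then 0
     else if fst x = 0 then 1
     else if end_edge ps x then (if fst x = i0 then 2 else 2 + min (rank i0 (fst x)) (rank_cap ps i0))
     else length ps + 3)"

definition colour :: "nat list \<Rightarrow> nat \<Rightarrow> (nat \<times> nat) set \<Rightarrow> nat \<times> nat \<Rightarrow> bool" where
  "colour ps i0 U x =
    (if x \<notin> U \<and> end_edge ps x then (snd x = 0) = top_path ps i0 (fst x) else odd (snd x))"

definition share_hub :: "nat list \<Rightarrow> nat \<times> nat \<Rightarrow> nat \<times> nat \<Rightarrow> bool" where
  "share_hub ps x y \<longleftrightarrow> (snd x = 0 \<and> snd y = 0) \<or> (Suc (snd x) = ps ! fst x \<and> Suc (snd y) = ps ! fst y)"

definition scheme_arcs :: "nat list \<Rightarrow> nat \<Rightarrow> (nat \<times> nat) set \<Rightarrow> ((nat \<times> nat) \<times> (nat \<times> nat)) set" where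
  "scheme_arcs ps i0 U = {(x, y). x \<in> edge_index ps \<and> y \<in> edge_index ps \<and> index_adj ps x y \<and>
     (level ps i0 U y < level ps i0 U x \<or>
      (level ps i0 U y = level ps i0 U x \<and> colour ps i0 U x \<noteq> colour ps i0 U y \<and>
       colour ps i0 U x = (\<not> share_hub ps x y)))}"

lemma card_Un3_le: "card (X \<union> Y \<union> Z) \<le> card X + card Y + card Z"
  using card_Un_le[of "X \<union> Y" Z] card_Un_le[of X Y] by linarith

locale theta_scheme =
  fixes ps :: "nat list" and i0 :: nat and U :: "(nat \<times> nat) set"
  assumes chorded: "chorded_theta ps"
    and distinguished: "(i0 = length ps \<and> U = {}) \<or>
      (\<exists>j. 0 < i0 \<and> i0 < length ps \<and> 0 < j \<and> j < ps ! i0 \<and> U = {(i0, j - 1), (i0, j)})"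
begin

abbreviation "m \<equiv> other_count ps i0"
abbreviation "K \<equiv> rank_cap ps i0"
abbreviation "S \<equiv> other_paths ps i0"
abbreviation "lv \<equiv> level ps i0 U"
abbreviation "pa \<equiv> colour ps i0 U"
abbreviation "B \<equiv> scheme_arcs ps i0 U"

lemma i0_pos: "0 < i0"
  using distinguished chorded unfolding chorded_theta_def by auto

lemma path0_length: "ps ! 0 = 1"
  using chorded unfolding chorded_theta_def by auto

lemma long_path: "0 < i \<Longrightarrow> i < length ps \<Longrightarrow> 2 \<le> ps ! i"
  using chorded unfolding chorded_theta_def by auto

lemma U_memD: "x \<in> U \<Longrightarrow> fst x = i0 \<and> i0 < length ps \<and> x \<in> edge_index ps"
  using distinguished unfolding edge_index_def by auto

lemma card_U_le: "card U \<le> 2"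
  using distinguished by (auto simp: card_insert_if)

lemma finite_U: "finite U"
  using distinguished by auto

lemma rank_range: "k \<in> S \<Longrightarrow> 1 \<le> rank i0 k \<and> rank i0 k \<le> m"
  using distinguished unfolding other_paths_def rank_def other_count_def by auto

lemma inj_on_rank: "inj_on (rank i0) S"
  unfolding inj_on_def other_paths_def rank_def by auto

lemma card_other_paths: "card S = m"
proof (cases "i0 = length ps")
  case True
  then have "S = {1..<length ps}" unfolding other_paths_def by auto
  then show ?thesis using True unfolding other_count_def by simp
next
  case False
  then have i0: "0 < i0" "i0 < length ps" using distinguished by auto
  then have "S = {1..<length ps} - {i0}" unfolding other_paths_def by auto
  then show ?thesis using i0 unfolding other_count_def by simp
qed

lemma finite_other_paths: "finite S"
  unfolding other_paths_def by auto

lemma rank_cap_le: "K \<le> max 1 m"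
  unfolding rank_cap_def by auto

lemma other_count_less: "m < length ps"
  using chorded unfolding other_count_def chorded_theta_def by auto

lemma card_rank_less: "card {k\<in>S. rank i0 k < t} \<le> t - 1"
proof -
  have "card {k\<in>S. rank i0 k < t} = card (rank i0 ` {k\<in>S. rank i0 k < t})"
    using inj_on_rank by (intro card_image[symmetric]) (auto intro: inj_on_subset)
  also have "\<dots> \<le> card {1..<t}"
    by (rule card_mono) (use rank_range in auto)
  finally show ?thesis by simp
qed

lemma edge_index_path0: "x \<in> edge_index ps \<Longrightarrow> fst x = 0 \<Longrightarrow> x = (0, 0)"
  using path0_length unfolding edge_index_def by (cases x) auto

lemma other_pathsI: "x \<in> edge_index ps \<Longrightarrow> fst x \<noteq> 0 \<Longrightarrow> fst x \<noteq> i0 \<Longrightarrow> fst x \<in> S"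
  unfolding edge_index_def other_paths_def by auto

lemma level_end_edge:
  assumes "x \<in> edge_index ps" "x \<notin> U" "end_edge ps x" "fst x \<noteq> i0"
  shows "lv x = 2 + min (rank i0 (fst x)) K \<and> 3 \<le> lv x \<and> lv x < length ps + 3"
  using assms other_pathsI[of x] rank_range[of "fst x"] rank_cap_le other_count_less
  unfolding level_def end_edge_def rank_cap_def by auto

text \<open>Both end edges of path \<open>i0\<close> outside \<open>U\<close> are only adjacent if the path has length 2, and then
  they make up \<open>U\<close>.\<close>

lemma end_edges_i0_not_adjacent:
  assumes x: "x \<in> edge_index ps" "x \<notin> U" "end_edge ps x" "fst x = i0"
    and y: "y \<in> edge_index ps" "y \<notin> U" "end_edge ps y" "fst y = i0"
  shows "\<not> index_adj ps x y"
proof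
  assume adj: "index_adj ps x y"
  obtain j l where xy: "x = (i0, j)" "y = (i0, l)" using x(4) y(4) by (cases x, cases y) auto
  then have "i0 < length ps" "j < ps ! i0" "l < ps ! i0" using x(1) y(1) unfolding edge_index_def by auto
  then obtain j0 where U: "0 < j0" "j0 < ps ! i0" "U = {(i0, j0 - 1), (i0, j0)}"
    using distinguished by auto
  have "ps ! i0 = 2 \<and> {j, l} = {0, 1}"
    using x(3) y(3) adj \<open>j < ps ! i0\<close> \<open>l < ps ! i0\<close> unfolding xy end_edge_def index_adj_def by auto
  then show False using x(2) y(2) U xy by (auto simp: doubleton_eq_iff)
qed

lemma colour_differs_on_end_edge_level:
  assumes x: "x \<in> edge_index ps" "x \<notin> U" "end_edge ps x" "fst x \<noteq> i0"
    and y: "y \<in> edge_index ps" "y \<notin> U" "end_edge ps y" "fst y \<noteq> i0"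
    and adj: "index_adj ps x y" and eq: "lv x = lv y"
  shows "pa x \<noteq> pa y"
proof -
  obtain i j k l where xy: "x = (i, j)" "y = (k, l)" by (cases x, cases y)
  have ne: "x \<noteq> y" using adj unfolding index_adj_def by auto
  have hx: "0 < i" "i < length ps" "j < ps ! i" and hy: "0 < k" "k < length ps" "l < ps ! k"
    using x y xy unfolding edge_index_def end_edge_def by auto
  have iS: "i \<in> S" and kS: "k \<in> S" using other_pathsI x y xy hx hy by auto
  show ?thesis
  proof (cases "k = i")
    case True
    then have "(j = 0) \<noteq> (l = 0)" using ne x(3) y(3) xy unfolding end_edge_def by auto
    then show ?thesis using x(2,3) y(2,3) xy True unfolding colour_def by auto
  next
    case False
    have "rank i0 i \<noteq> rank i0 k" using inj_on_rank iS kS False unfolding inj_on_def by auto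
    moreover have "min (rank i0 i) K = min (rank i0 k) K"
      using level_end_edge[OF x] level_end_edge[OF y] eq xy by auto
    ultimately have "rank i0 i \<ge> K" "rank i0 k \<ge> K" "rank i0 i \<noteq> rank i0 k" by linarith+
    moreover have "rank i0 i \<le> m" "rank i0 k \<le> m" "1 \<le> rank i0 i" "1 \<le> rank i0 k"
      using rank_range iS kS by auto
    ultimately have "top_path ps i0 i \<noteq> top_path ps i0 k"
      unfolding top_path_def rank_cap_def by auto
    moreover have "share_hub ps x y" using adj False xy unfolding index_adj_def share_hub_def by auto
    then have "(j = 0 \<and> l = 0) \<or> (j \<noteq> 0 \<and> l \<noteq> 0)"
      using xy long_path[of i] long_path[of k] hx hy unfolding share_hub_def by auto
    ultimately show ?thesis using x(2,3) y(2,3) xy unfolding colour_def by auto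
  qed
qed

lemma colour_differs_on_level:
  assumes x: "x \<in> edge_index ps" and y: "y \<in> edge_index ps"
    and adj: "index_adj ps x y" and eq: "lv x = lv y"
  shows "pa x \<noteq> pa y"
proof -
  obtain i j k l where xy: "x = (i, j)" "y = (k, l)" by (cases x, cases y)
  have ne: "x \<noteq> y" using adj unfolding index_adj_def by auto
  show ?thesis
  proof (cases "x \<in> U")
    case True
    then have "y \<in> U" using eq unfolding level_def by (auto split: if_splits)
    then show ?thesis using True ne distinguished unfolding colour_def xy by auto
  next
    case xU: False
    then have yU: "y \<notin> U" using eq unfolding level_def by (auto split: if_splits)
    consider "i = 0" | "i \<noteq> 0" "end_edge ps x" | "i \<noteq> 0" "\<not> end_edge ps x" by blast
    then show ?thesis
    proof cases
      case 1
      then have "lv x = 1" using xU xy unfolding level_def by auto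
      then have "k = 0" using eq yU xy level_end_edge[OF y] unfolding level_def by (auto split: if_splits)
      then show ?thesis using edge_index_path0[OF x] edge_index_path0[OF y] 1 xy ne by auto
    next
      case 2
      show ?thesis
      proof (cases "i = i0")
        case True
        then have "lv x = 2" using xU 2 xy unfolding level_def by auto
        then have "end_edge ps y \<and> k = i0"
          using eq yU xy level_end_edge[OF y] unfolding level_def by (auto split: if_splits)
        then show ?thesis using end_edges_i0_not_adjacent[OF x xU _ _ y yU] 2 True xy adj by auto
      next
        case False
        then have "lv x = 2 + min (rank i0 i) K" "3 \<le> lv x" "lv x < length ps + 3"
          using level_end_edge[OF x xU] 2 xy by auto
        then have "end_edge ps y \<and> k \<noteq> i0" using eq yU xy unfolding level_def by (auto split: if_splits)
        then show ?thesis using colour_differs_on_end_edge_level[OF x xU _ _ y yU _ _ adj eq] 2 False xy by auto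
      qed
    next
      case 3
      then have lx: "lv x = length ps + 3" using xU xy unfolding level_def by auto
      have "k \<noteq> 0" using lx eq yU xy unfolding level_def by (auto split: if_splits)
      moreover have "\<not> end_edge ps y"
        using level_end_edge[OF y yU] lx eq yU xy \<open>k \<noteq> 0\<close> unfolding level_def by (auto split: if_splits)
      ultimately have "i = k \<and> (Suc j = l \<or> Suc l = j)"
        using adj 3 xy unfolding index_adj_def end_edge_def by auto
      then show ?thesis using xU yU 3 \<open>\<not> end_edge ps y\<close> xy unfolding colour_def by auto
    qed
  qed
qed

lemma orientation_scheme_arcs: "orientation (edge_index ps) (index_adj ps) B"
  unfolding orientation_def
proof (intro conjI ballI impI)
  show "B \<subseteq> {(u, v). u \<in> edge_index ps \<and> v \<in> edge_index ps \<and> index_adj ps u v}"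
    unfolding scheme_arcs_def by auto
next
  fix u v assume u: "u \<in> edge_index ps" and v: "v \<in> edge_index ps" and a: "index_adj ps u v"
  have a': "index_adj ps v u" using a unfolding index_adj_def by auto
  have s: "share_hub ps u v = share_hub ps v u" unfolding share_hub_def by auto
  show "(u, v) \<in> B \<or> (v, u) \<in> B"
  proof (cases "lv u = lv v")
    case True
    then have "pa u \<noteq> pa v" using colour_differs_on_level[OF u v a] by auto
    then show ?thesis using True u v a a' s unfolding scheme_arcs_def by auto
  next
    case False
    then show ?thesis using u v a a' unfolding scheme_arcs_def by auto
  qed
qed

lemma kernel_perfect_scheme_arcs: "kernel_perfect (edge_index ps) B"
  by (rule kernel_perfect_by_level_and_colour[where lv = lv and pa = pa])
    (auto simp: finite_edge_index scheme_arcs_def)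

text \<open>\<open>c0\<close> counts the end edges of the distinguished path at each hub.\<close>

abbreviation "c0 \<equiv> (if i0 < length ps then 1 else 0 :: nat)"

lemma level_pos: "w \<notin> U \<Longrightarrow> 1 \<le> lv w"
  unfolding level_def by auto

lemma scheme_arcsD:
  "(x, w) \<in> B \<Longrightarrow> w \<in> edge_index ps \<and> index_adj ps x w \<and>
    (lv w < lv x \<or> (lv w = lv x \<and> pa x \<noteq> pa w \<and> pa x = (\<not> share_hub ps x w)))"
  unfolding scheme_arcs_def by auto

lemma card_singleton_edge_index: "fst z = i0 \<Longrightarrow> card ({z} \<inter> edge_index ps) \<le> c0"
proof (cases "i0 < length ps")
  case True
  have "card ({z} \<inter> edge_index ps) \<le> card {z}" by (rule card_mono) auto
  then show ?thesis using True by simp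
next
  case False
  assume "fst z = i0"
  then have "{z} \<inter> edge_index ps = {}" using False unfolding edge_index_def by (cases z) auto
  then show ?thesis by simp
qed

lemma out_degree_U:
  assumes "x \<in> U"
  shows "out_degree B x \<le> 1"
proof -
  have "{w. (x, w) \<in> B} \<subseteq> U - {x}"
  proof
    fix w assume "w \<in> {w. (x, w) \<in> B}"
    then have "lv w \<le> lv x" "w \<noteq> x" using scheme_arcsD[of x w] unfolding index_adj_def by auto
    then show "w \<in> U - {x}" using assms level_pos[of w] unfolding level_def by (auto split: if_splits)
  qed
  then have "card {w. (x, w) \<in> B} \<le> card (U - {x})" using finite_U by (auto intro: card_mono)
  also have "\<dots> \<le> 1" using card_U_le assms finite_U by (simp add: card_Diff_singleton)
  finally show ?thesis unfolding out_degree_def .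
qed

lemma out_degree_inner_edge:
  assumes "x \<in> edge_index ps" "x \<notin> U" "fst x \<noteq> 0" "\<not> end_edge ps x"
  shows "out_degree B x \<le> 2"
proof -
  have "{w. (x, w) \<in> B} \<subseteq> {(fst x, snd x - 1), (fst x, Suc (snd x))}"
  proof
    fix w assume "w \<in> {w. (x, w) \<in> B}"
    then have "index_adj ps x w" using scheme_arcsD by auto
    then show "w \<in> {(fst x, snd x - 1), (fst x, Suc (snd x))}"
      using assms unfolding index_adj_def end_edge_def by (cases w) auto
  qed
  then have "card {w. (x, w) \<in> B} \<le> card {(fst x, snd x - 1), (fst x, Suc (snd x))}"
    by (rule card_mono[rotated]) simp
  also have "\<dots> \<le> 2" by (simp add: card_insert_if)
  finally show ?thesis unfolding out_degree_def .
qed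

lemma out_degree_chord:
  assumes "(0, 0) \<notin> U"
  shows "out_degree B (0, 0) \<le> card U"
proof -
  have "{w. ((0, 0), w) \<in> B} \<subseteq> U"
  proof
    fix w assume "w \<in> {w. ((0, 0), w) \<in> B}"
    then have w: "w \<in> edge_index ps" "lv w \<le> lv (0, 0)" "w \<noteq> (0, 0)"
      using scheme_arcsD[of "(0, 0)" w] unfolding index_adj_def by auto
    show "w \<in> U"
    proof (rule ccontr)
      assume "w \<notin> U"
      then have "fst w = 0" using w assms unfolding level_def by (auto split: if_splits)
      then show False using edge_index_path0[OF w(1)] w by auto
    qed
  qed
  then show ?thesis unfolding out_degree_def using finite_U by (auto intro: card_mono)
qed

lemma out_degree_end_edge_i0:
  assumes x: "x \<in> edge_index ps" "x \<notin> U" "end_edge ps x" "fst x = i0"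
  shows "out_degree B x \<le> 3"
proof -
  have lx: "lv x = 2" using assms i0_pos unfolding level_def end_edge_def by auto
  have "{w. (x, w) \<in> B} \<subseteq> insert (0, 0) U"
  proof
    fix w assume "w \<in> {w. (x, w) \<in> B}"
    then have w: "w \<in> edge_index ps" "lv w \<le> 2" "index_adj ps x w" using scheme_arcsD[of x w] lx by auto
    show "w \<in> insert (0, 0) U"
    proof (rule ccontr)
      assume nw: "w \<notin> insert (0, 0) U"
      then have "fst w \<noteq> 0" using edge_index_path0[OF w(1)] by auto
      then have "end_edge ps w \<and> fst w = i0"
        using w nw level_end_edge[OF w(1)] unfolding level_def by (auto split: if_splits)
      then show False using end_edges_i0_not_adjacent[OF x(1-4) w(1)] w(3) nw by auto
    qed
  qed
  then have "card {w. (x, w) \<in> B} \<le> card (insert (0, 0) U)" using finite_U by (auto intro: card_mono)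
  also have "\<dots> \<le> 3" using card_U_le finite_U by (simp add: card_insert_if)
  finally show ?thesis unfolding out_degree_def .
qed

lemma first_edge_facts:
  assumes "i \<in> S"
  shows "(i, 0) \<in> edge_index ps" "(i, 0) \<notin> U" "end_edge ps (i, 0)"
    "lv (i, 0) = 2 + min (rank i0 i) K" "pa (i, 0) = top_path ps i0 i"
proof -
  show i: "(i, 0) \<in> edge_index ps" using assms long_path[of i] unfolding other_paths_def edge_index_def by auto
  show U: "(i, 0) \<notin> U" using U_memD assms unfolding other_paths_def by auto
  show e: "end_edge ps (i, 0)" using assms unfolding other_paths_def end_edge_def by auto
  show "lv (i, 0) = 2 + min (rank i0 i) K"
    using level_end_edge[OF i U e] assms unfolding other_paths_def by auto
  show "pa (i, 0) = top_path ps i0 i" using U e unfolding colour_def by auto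
qed

lemma last_edge_facts:
  assumes "i \<in> S"
  shows "(i, ps ! i - 1) \<in> edge_index ps" "(i, ps ! i - 1) \<notin> U" "end_edge ps (i, ps ! i - 1)"
    "lv (i, ps ! i - 1) = 2 + min (rank i0 i) K" "pa (i, ps ! i - 1) = (\<not> top_path ps i0 i)"
    "2 \<le> ps ! i"
proof -
  show n: "2 \<le> ps ! i" using assms long_path[of i] unfolding other_paths_def by auto
  show i: "(i, ps ! i - 1) \<in> edge_index ps" using assms n unfolding other_paths_def edge_index_def by auto
  show U: "(i, ps ! i - 1) \<notin> U" using U_memD assms unfolding other_paths_def by auto
  show e: "end_edge ps (i, ps ! i - 1)" using assms n unfolding other_paths_def end_edge_def by auto
  show "lv (i, ps ! i - 1) = 2 + min (rank i0 i) K"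
    using level_end_edge[OF i U e] assms unfolding other_paths_def by auto
  show "pa (i, ps ! i - 1) = (\<not> top_path ps i0 i)" using U e n unfolding colour_def by auto
qed

lemma out_arcs_first_edge_top:
  assumes iS: "i \<in> S" and top: "top_path ps i0 i"
  shows "{w. ((i, 0), w) \<in> B} \<subseteq>
    {(0, 0), (i, 1)} \<union> ({(i0, 0)} \<inter> edge_index ps) \<union> (\<lambda>k. (k, 0)) ` {k\<in>S. rank i0 k < m - 1}"
proof
  fix w assume "w \<in> {w. ((i, 0), w) \<in> B}"
  note w = scheme_arcsD[OF this[simplified]]
  obtain k l where wk: "w = (k, l)" by (cases w)
  have "(l = 0 \<and> k \<noteq> i) \<or> w = (i, 1)"
    using w last_edge_facts(6)[OF iS] wk unfolding index_adj_def by auto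
  moreover have "k \<in> S \<Longrightarrow> l = 0 \<Longrightarrow> k \<noteq> i \<Longrightarrow> rank i0 k < m - 1"
  proof -
    assume kS: "k \<in> S" and "l = 0" "k \<noteq> i"
    then have "share_hub ps (i, 0) w" using wk unfolding share_hub_def by auto
    then have "lv w < lv (i, 0)" using w first_edge_facts(5)[OF iS] top by auto
    then show "rank i0 k < m - 1"
      using first_edge_facts(4)[OF kS] first_edge_facts(4)[OF iS] top \<open>l = 0\<close> wk
      unfolding top_path_def rank_cap_def by auto
  qed
  ultimately show "w \<in> {(0, 0), (i, 1)} \<union> ({(i0, 0)} \<inter> edge_index ps) \<union>
      (\<lambda>k. (k, 0)) ` {k\<in>S. rank i0 k < m - 1}"
    using other_pathsI[of w] w wk by (cases "k = 0 \<or> k = i0") auto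
qed

lemma out_arcs_first_edge:
  assumes iS: "i \<in> S" and not_top: "\<not> top_path ps i0 i"
  shows "{w. ((i, 0), w) \<in> B} \<subseteq> {(0, 0)} \<union> ({(i0, 0)} \<inter> edge_index ps) \<union> (\<lambda>k. (k, 0)) ` (S - {i})"
proof
  fix w assume "w \<in> {w. ((i, 0), w) \<in> B}"
  note w = scheme_arcsD[OF this[simplified]]
  note fa = first_edge_facts[OF iS]
  obtain k l where wk: "w = (k, l)" by (cases w)
  have n2: "2 \<le> ps ! i" using last_edge_facts(6)[OF iS] .
  have iz: "i \<noteq> 0" "i \<noteq> i0" using iS unfolding other_paths_def by auto
  have "w \<noteq> (i, 1)"
  proof
    assume wi: "w = (i, 1)"
    then have wU: "w \<notin> U" using U_memD iz by auto
    show False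
    proof (cases "ps ! i = 2")
      case True
      then have "end_edge ps w" using wi iz unfolding end_edge_def by auto
      then have "lv w = lv (i, 0)" using level_end_edge[OF w[THEN conjunct1] wU] fa wi iz by auto
      moreover have "\<not> share_hub ps (i, 0) w" using wi True unfolding share_hub_def by auto
      ultimately show False using w fa not_top by auto
    next
      case False
      then have "\<not> end_edge ps w" using n2 wi iz unfolding end_edge_def by auto
      then have "lv w = length ps + 3" using wU wi iz unfolding level_def by auto
      moreover have "lv (i, 0) < length ps + 3" using level_end_edge[OF fa(1-3)] iz by auto
      ultimately show False using w by auto
    qed
  qed
  then have "l = 0 \<and> k \<noteq> i" using w n2 wk unfolding index_adj_def by auto
  then show "w \<in> {(0, 0)} \<union> ({(i0, 0)} \<inter> edge_index ps) \<union> (\<lambda>k. (k, 0)) ` (S - {i})"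
    using other_pathsI[of w] w wk by (cases "k = 0 \<or> k = i0") auto
qed

lemma out_degree_first_edge:
  assumes iS: "i \<in> S"
  shows "out_degree B (i, 0) \<le> m + c0"
proof (cases "top_path ps i0 i")
  case True
  let ?T = "{k\<in>S. rank i0 k < m - 1}"
  have "out_degree B (i, 0) \<le>
      card ({(0, 0), (i, 1)} \<union> ({(i0, 0)} \<inter> edge_index ps) \<union> (\<lambda>k. (k, 0)) ` ?T)"
    unfolding out_degree_def by (rule card_mono[OF _ out_arcs_first_edge_top[OF iS True]]) (auto simp: finite_other_paths)
  also have "\<dots> \<le> card {(0, 0), (i, 1::nat)} + card ({(i0, 0)} \<inter> edge_index ps) + card ((\<lambda>k. (k, 0::nat)) ` ?T)"
    by (rule card_Un3_le)
  also have "\<dots> \<le> 2 + c0 + (m - 2)"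
    using card_singleton_edge_index[of "(i0, 0)"] card_rank_less[of "m - 1"] card_image_le[of ?T "\<lambda>k. (k, 0::nat)"]
      finite_other_paths
    by (intro add_mono) (auto simp: card_insert_if numeral_2_eq_2)
  also have "\<dots> = m + c0" using True unfolding top_path_def by auto
  finally show ?thesis .
next
  case False
  have "out_degree B (i, 0) \<le> card ({(0, 0)} \<union> ({(i0, 0)} \<inter> edge_index ps) \<union> (\<lambda>k. (k, 0)) ` (S - {i}))"
    unfolding out_degree_def by (rule card_mono[OF _ out_arcs_first_edge[OF iS False]]) (auto simp: finite_other_paths)
  also have "\<dots> \<le> card {(0::nat, 0::nat)} + card ({(i0, 0)} \<inter> edge_index ps) + card ((\<lambda>k. (k, 0::nat)) ` (S - {i}))"
    by (rule card_Un3_le)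
  also have "\<dots> \<le> 1 + c0 + (m - 1)"
    using card_singleton_edge_index[of "(i0, 0)"] card_image_le[of "S - {i}" "\<lambda>k. (k, 0::nat)"]
      finite_other_paths card_other_paths iS
    by (intro add_mono) (auto simp: card_Diff_singleton)
  also have "\<dots> = m + c0" using card_other_paths iS finite_other_paths by (cases m) auto
  finally show ?thesis .
qed

lemma last_edge_neighbour:
  assumes iS: "i \<in> S" and "(k, l) \<in> edge_index ps" "index_adj ps (i, ps ! i - 1) (k, l)"
  shows "(k \<noteq> i \<and> Suc l = ps ! k) \<or> (k, l) = (i, ps ! i - 2)"
  using assms last_edge_facts(6)[OF iS] unfolding index_adj_def edge_index_def by auto

lemma last_edge_at_hub2:
  assumes "(k, l) \<in> edge_index ps" "Suc l = ps ! k"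
  shows "(k, ps ! k - 1) \<in> {(0, 0)} \<union> ({(i0, ps ! i0 - 1)} \<inter> edge_index ps) \<or> k \<in> S"
  using assms path0_length other_pathsI[of "(k, l)"] unfolding edge_index_def by (cases "k = 0 \<or> k = i0") auto

lemma out_arcs_last_edge_top:
  assumes iS: "i \<in> S" and top: "top_path ps i0 i"
  shows "{w. ((i, ps ! i - 1), w) \<in> B} \<subseteq>
    {(0, 0)} \<union> ({(i0, ps ! i0 - 1)} \<inter> edge_index ps) \<union> (\<lambda>k. (k, ps ! k - 1)) ` (S - {i})"
proof
  let ?x = "(i, ps ! i - 1)"
  fix w assume "w \<in> {w. (?x, w) \<in> B}"
  note w = scheme_arcsD[OF this[simplified]]
  note fb = last_edge_facts[OF iS]
  obtain k l where wk: "w = (k, l)" by (cases w)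
  have iz: "i \<noteq> 0" "i \<noteq> i0" using iS unfolding other_paths_def by auto
  have "w \<noteq> (i, ps ! i - 2)"
  proof
    assume wi: "w = (i, ps ! i - 2)"
    show False
    proof (cases "ps ! i = 2")
      case True
      then have "w = (i, 0)" using wi by simp
      then have "lv w = lv ?x" "pa w = top_path ps i0 i" "\<not> share_hub ps ?x w"
        using first_edge_facts(4,5)[OF iS] fb(4) True unfolding share_hub_def by auto
      then show False using w fb(5) top by auto
    next
      case False
      have "w \<notin> U" using U_memD iz wi by auto
      moreover have "\<not> end_edge ps w" using False fb(6) iz wi unfolding end_edge_def by auto
      ultimately have "lv w = length ps + 3" using iz wi unfolding level_def by auto
      moreover have "lv ?x < length ps + 3" using level_end_edge[OF fb(1-3)] iz by auto
      ultimately show False using w by auto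
    qed
  qed
  then have "k \<noteq> i \<and> Suc l = ps ! k" using last_edge_neighbour[OF iS, of k l] w wk by auto
  then show "w \<in> {(0, 0)} \<union> ({(i0, ps ! i0 - 1)} \<inter> edge_index ps) \<union> (\<lambda>k. (k, ps ! k - 1)) ` (S - {i})"
    using last_edge_at_hub2[of k l] w wk by auto
qed

lemma out_arcs_last_edge:
  assumes iS: "i \<in> S" and not_top: "\<not> top_path ps i0 i"
  shows "{w. ((i, ps ! i - 1), w) \<in> B} \<subseteq> {(0, 0), (i, ps ! i - 2)} \<union>
    ({(i0, ps ! i0 - 1)} \<inter> edge_index ps) \<union> (\<lambda>k. (k, ps ! k - 1)) ` {k\<in>S. rank i0 k < min (rank i0 i) K}"
proof
  let ?x = "(i, ps ! i - 1)"
  fix w assume "w \<in> {w. (?x, w) \<in> B}"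
  note w = scheme_arcsD[OF this[simplified]]
  note fb = last_edge_facts[OF iS]
  obtain k l where wk: "w = (k, l)" by (cases w)
  have lower: "k \<in> S \<Longrightarrow> k \<noteq> i \<Longrightarrow> Suc l = ps ! k \<Longrightarrow> rank i0 k < min (rank i0 i) K"
  proof -
    assume kS: "k \<in> S" and "k \<noteq> i" "Suc l = ps ! k"
    then have wl: "w = (k, ps ! k - 1)" using wk by auto
    then have "share_hub ps ?x w" using fb(6) last_edge_facts(6)[OF kS] unfolding share_hub_def by auto
    then have "lv w < lv ?x" using w fb(5) not_top by auto
    then show ?thesis using last_edge_facts(4)[OF kS] fb(4) wl by auto
  qed
  from last_edge_neighbour[OF iS, of k l] w wk
  consider "k \<noteq> i" "Suc l = ps ! k" | "w = (i, ps ! i - 2)" by auto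
  then show "w \<in> {(0, 0), (i, ps ! i - 2)} \<union> ({(i0, ps ! i0 - 1)} \<inter> edge_index ps) \<union>
      (\<lambda>k. (k, ps ! k - 1)) ` {k\<in>S. rank i0 k < min (rank i0 i) K}"
  proof cases
    case 1
    then have "w = (k, ps ! k - 1)" using wk by auto
    then show ?thesis using last_edge_at_hub2[of k l] w wk 1 lower by auto
  qed simp
qed

lemma out_degree_last_edge:
  assumes iS: "i \<in> S"
  shows "out_degree B (i, ps ! i - 1) \<le> max 2 m + c0"
proof (cases "top_path ps i0 i")
  case True
  let ?T = "S - {i}"
  have "out_degree B (i, ps ! i - 1) \<le>
      card ({(0, 0)} \<union> ({(i0, ps ! i0 - 1)} \<inter> edge_index ps) \<union> (\<lambda>k. (k, ps ! k - 1)) ` ?T)"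
    unfolding out_degree_def by (rule card_mono[OF _ out_arcs_last_edge_top[OF iS True]]) (auto simp: finite_other_paths)
  also have "\<dots> \<le> card {(0::nat, 0::nat)} + card ({(i0, ps ! i0 - 1)} \<inter> edge_index ps) +
      card ((\<lambda>k. (k, ps ! k - 1)) ` ?T)"
    by (rule card_Un3_le)
  also have "\<dots> \<le> 1 + c0 + (m - 1)"
    using card_singleton_edge_index[of "(i0, ps ! i0 - 1)"] card_image_le[of ?T "\<lambda>k. (k, ps ! k - 1)"]
      finite_other_paths card_other_paths iS
    by (intro add_mono) (auto simp: card_Diff_singleton)
  finally show ?thesis by simp
next
  case False
  let ?T = "{k\<in>S. rank i0 k < min (rank i0 i) K}"
  have "out_degree B (i, ps ! i - 1) \<le> card ({(0, 0), (i, ps ! i - 2)} \<union>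
      ({(i0, ps ! i0 - 1)} \<inter> edge_index ps) \<union> (\<lambda>k. (k, ps ! k - 1)) ` ?T)"
    unfolding out_degree_def by (rule card_mono[OF _ out_arcs_last_edge[OF iS False]]) (auto simp: finite_other_paths)
  also have "\<dots> \<le> card {(0, 0), (i, ps ! i - 2)} + card ({(i0, ps ! i0 - 1)} \<inter> edge_index ps) +
      card ((\<lambda>k. (k, ps ! k - 1)) ` ?T)"
    by (rule card_Un3_le)
  also have "\<dots> \<le> 2 + c0 + (min (rank i0 i) K - 1)"
    using card_singleton_edge_index[of "(i0, ps ! i0 - 1)"] card_rank_less[of "min (rank i0 i) K"]
      card_image_le[of ?T "\<lambda>k. (k, ps ! k - 1)"] finite_other_paths
    by (intro add_mono) (auto simp: card_insert_if)
  finally show ?thesis using rank_range[OF iS] unfolding rank_cap_def by simp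
qed

lemma f_kernel_perfect_orientation_scheme_arcsI:
  assumes "\<And>x. x \<in> edge_index ps \<Longrightarrow> 1 + out_degree B x \<le> f x"
  shows "f_kernel_perfect_orientation (edge_index ps) (index_adj ps) f B"
  unfolding f_kernel_perfect_orientation_def
  using orientation_scheme_arcs kernel_perfect_scheme_arcs assms by auto

lemma edge_index_cases:
  assumes x: "x \<in> edge_index ps"
  obtains (in_U) "x \<in> U"
  | (chord) "x = (0, 0)"
  | (end_i0) "x \<notin> U" "end_edge ps x" "fst x = i0"
  | (first) i where "i \<in> S" "x = (i, 0)"
  | (last) i where "i \<in> S" "x = (i, ps ! i - 1)"
  | (inner) "x \<notin> U" "fst x \<noteq> 0" "\<not> end_edge ps x"
proof (cases "x \<in> U")
  case False
  obtain i j where xij: "x = (i, j)" "i < length ps" "j < ps ! i" using x unfolding edge_index_def by auto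
  show thesis
  proof (cases "i = 0 \<or> \<not> end_edge ps x")
    case True
    show thesis
    proof (cases "i = 0")
      case True
      then show thesis using chord edge_index_path0[OF x] xij by simp
    next
      case False
      then show thesis using inner \<open>x \<notin> U\<close> \<open>i = 0 \<or> \<not> end_edge ps x\<close> xij by simp
    qed
  next
    case end_edge: False
    show thesis
    proof (cases "i = i0")
      case True
      then show thesis using end_i0 False end_edge xij by auto
    next
      case False
      then have "i \<in> S" using other_pathsI[OF x] end_edge xij by auto
      moreover have "j = 0 \<or> j = ps ! i - 1" using end_edge xij unfolding end_edge_def by auto
      ultimately show thesis using first last xij by blast
    qed
  qed
qed (rule in_U)

end

lemma orientation_for_hub1:
  assumes g: "chorded_theta ps" and p: "length ps \<le> p" "4 \<le> p"
  shows "f_kernel_perfect_orientation (edge_index ps) (index_adj ps)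
    (\<lambda>x. if snd x = 0 then length ps else p) (scheme_arcs ps (length ps) {})"
proof -
  interpret theta_scheme ps "length ps" "{}" using g by unfold_locales auto
  have L: "1 \<le> length ps" using g unfolding chorded_theta_def by (cases ps) auto
  have m: "m = length ps - 1" unfolding other_count_def by auto
  show ?thesis
  proof (rule f_kernel_perfect_orientation_scheme_arcsI)
    fix x assume x: "x \<in> edge_index ps"
    then show "1 + out_degree B x \<le> (if snd x = 0 then length ps else p)"
    proof (cases rule: edge_index_cases)
      case chord
      then show ?thesis using out_degree_chord L by auto
    next
      case end_i0
      then show ?thesis using x unfolding edge_index_def by auto
    next
      case (first i)
      then show ?thesis using out_degree_first_edge[of i] m L by auto
    next
      case (last i)
      then have "out_degree B x \<le> max 2 m" "snd x \<noteq> 0"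
        using out_degree_last_edge[of i] last_edge_facts(6)[of i] by auto
      moreover have "max 2 m < p" using m p by auto
      ultimately show ?thesis by auto
    next
      case inner
      then show ?thesis using out_degree_inner_edge[OF x] p unfolding end_edge_def by auto
    qed simp
  qed
qed

lemma orientation_for_inner_vertex:
  assumes g: "chorded_theta ps" and p: "length ps \<le> p" "4 \<le> p"
    and v: "i0 < length ps" "0 < j" "j < ps ! i0"
  shows "f_kernel_perfect_orientation (edge_index ps) (index_adj ps)
    (\<lambda>x. if x \<in> {(i0, j - 1), (i0, j)} then 2 else p) (scheme_arcs ps i0 {(i0, j - 1), (i0, j)})"
proof -
  have "0 < i0" using v g unfolding chorded_theta_def by (cases i0) auto
  then interpret theta_scheme ps i0 "{(i0, j - 1), (i0, j)}" using g v by unfold_locales auto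
  have m: "m = length ps - 2" using v unfolding other_count_def by auto
  show ?thesis
  proof (rule f_kernel_perfect_orientation_scheme_arcsI)
    fix x assume x: "x \<in> edge_index ps"
    then show "1 + out_degree B x \<le> (if x \<in> {(i0, j - 1), (i0, j)} then 2 else p)"
    proof (cases rule: edge_index_cases)
      case in_U
      then show ?thesis using out_degree_U by auto
    next
      case chord
      then show ?thesis using out_degree_chord card_U_le i0_pos p by fastforce
    next
      case end_i0
      then show ?thesis using out_degree_end_edge_i0[OF x] p by auto
    next
      case (first i)
      then have "x \<notin> {(i0, j - 1), (i0, j)}" unfolding other_paths_def by auto
      then show ?thesis using out_degree_first_edge[of i] first m v p by auto
    next
      case (last i)
      then have "x \<notin> {(i0, j - 1), (i0, j)}" unfolding other_paths_def by auto
      moreover have "out_degree B x \<le> max 2 m + 1" using out_degree_last_edge[of i] last v by auto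
      moreover have "max 2 m + 1 < p" using m p by auto
      ultimately show ?thesis by auto
    next
      case inner
      then show ?thesis using out_degree_inner_edge[OF x] p by auto
    qed
  qed
qed

lemma f_edge_orientable_theta_edgesI:
  assumes g: "chorded_theta ps"
    and A: "f_kernel_perfect_orientation (edge_index ps) (index_adj ps) f A"
    and f': "\<And>x. x \<in> edge_index ps \<Longrightarrow> f' (theta_edge ps x) = f x"
  shows "f_edge_orientable (theta_edges ps) f'"
proof -
  have "f_kernel_perfect_orientation (theta_edge ps ` edge_index ps) line_adj f'
      (map_prod (theta_edge ps) (theta_edge ps) ` A)"
    by (rule f_kernel_perfect_orientation_image[OF inj_on_theta_edge[OF g] line_adj_theta_edge[OF g]
          f' A])
  then show ?thesis unfolding f_edge_orientable_def theta_edges_eq_image by blast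
qed

lemma f_edge_orientable_hub1:
  assumes g: "chorded_theta ps" and "length ps \<le> p" "4 \<le> p"
  shows "f_edge_orientable (theta_edges ps) (f_kv (theta_edges ps) p (0, 0))"
  by (rule f_edge_orientable_theta_edgesI[OF g orientation_for_hub1[OF assms]])
    (simp add: f_kv_def hub1_in_theta_edge_iff[OF g] degree_hub1[OF g])

lemma f_edge_orientable_hub2:
  assumes g: "chorded_theta ps" and "length ps \<le> p" "4 \<le> p"
  shows "f_edge_orientable (theta_edges ps) (f_kv (theta_edges ps) p (0, 1))"
proof -
  let ?f = "\<lambda>y. if Suc (snd y) = ps ! fst y then length ps else p"
  have "f_kernel_perfect_orientation (reverse_path ps ` edge_index ps) (index_adj ps) ?f
      (map_prod (reverse_path ps) (reverse_path ps) ` scheme_arcs ps (length ps) {})"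
  proof (rule f_kernel_perfect_orientation_image[OF inj_on_reverse_path index_adj_reverse_path _
        orientation_for_hub1[OF assms]])
    fix x assume "x \<in> edge_index ps"
    then show "?f (reverse_path ps x) = (if snd x = 0 then length ps else p)"
      unfolding reverse_path_def edge_index_def by auto
  qed
  then show ?thesis
    unfolding reverse_path_image
    by (rule f_edge_orientable_theta_edgesI[OF g])
      (use hub2_in_theta_edge_iff[OF g] degree_hub2[OF g] in \<open>auto simp: f_kv_def\<close>)
qed

lemma f_edge_orientable_inner_vertex:
  assumes g: "chorded_theta ps" and p: "length ps \<le> p" "4 \<le> p"
    and v: "i < length ps" "0 < j" "j < ps ! i"
  shows "f_edge_orientable (theta_edges ps) (f_kv (theta_edges ps) p (theta_vertex ps i j))"
proof (rule f_edge_orientable_theta_edgesI[OF g orientation_for_inner_vertex[OF g p v]])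
  fix x assume x: "x \<in> edge_index ps"
  have "theta_vertex ps i j \<in> theta_edge ps x \<longleftrightarrow> x \<in> {(i, j - 1), (i, j)}"
    using inner_vertex_in_theta_edge_iff[OF g x v] v by (cases x) auto
  then show "f_kv (theta_edges ps) p (theta_vertex ps i j) (theta_edge ps x)
      = (if x \<in> {(i, j - 1), (i, j)} then 2 else p)"
    unfolding f_kv_def using degree_inner_vertex[OF g v] by auto
qed

lemma strongly_edge_orientable_chorded_theta:
  assumes g: "chorded_theta ps" and p: "length ps \<le> p" "4 \<le> p"
  shows "strongly_edge_orientable (theta_vertices ps) (theta_edges ps) p"
  unfolding strongly_edge_orientable_def
proof
  fix v assume "v \<in> theta_vertices ps"
  then show "f_edge_orientable (theta_edges ps) (f_kv (theta_edges ps) p v)"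
  proof (cases rule: theta_vertex_cases)
    case 1 then show ?thesis using f_edge_orientable_hub1[OF g p] by simp
  next
    case 2 then show ?thesis using f_edge_orientable_hub2[OF g p] by simp
  next
    case 3 then show ?thesis using f_edge_orientable_inner_vertex[OF g p] by simp
  qed
qed

lemma length_le_max_degree:
  assumes g: "chorded_theta ps"
  shows "length ps \<le> max_degree (theta_vertices ps) (theta_edges ps)"
proof -
  have "(0, 0) \<in> theta_vertices ps" unfolding theta_vertices_def by auto
  then show ?thesis
    unfolding max_degree_def degree_hub1[OF g, symmetric] using finite_theta_vertices by auto
qed

lemma chorded_theta_Cons_one:
  assumes "\<forall>q\<in>set qs. q > 0 \<and> even q"
  shows "chorded_theta (1 # qs)"
  unfolding chorded_theta_def
proof (intro conjI allI impI)
  fix i assume "0 < i \<and> i < length (1 # qs)"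
  then have "(1 # qs) ! i \<in> set qs" by (cases i) auto
  with assms show "2 \<le> (1 # qs) ! i" by (auto elim!: evenE)
qed auto

theorem mainTheorem15:
  fixes qs :: "nat list" and p :: nat
  assumes "length qs \<ge> 1"
    and "sorted qs"
    and "\<forall>q\<in>set qs. q > 0 \<and> even q"
    and "p \<ge> 4"
    and "p \<ge> max_degree (theta_vertices (1 # qs)) (theta_edges (1 # qs))"
  shows "strongly_edge_orientable (theta_vertices (1 # qs)) (theta_edges (1 # qs)) p"
proof -
  have g: "chorded_theta (1 # qs)" using assms(3) by (rule chorded_theta_Cons_one)
  have "length (1 # qs) \<le> p" using length_le_max_degree[OF g] assms(5) by linarith
  then show ?thesis using strongly_edge_orientable_chorded_theta[OF g] assms(4) by blast
qed

end
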